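(* Let $(X,d)$ be a complete $\mathrm{CAT}(0)$-space and $f:X\to\mathbb{R}$ a lower semi-continuous quasi-convex function. Assume in addition that either (1) $\inf_X f>-\infty$, or (2) $f$ is $\lambda$-convex for some $\lambda<0$. Then for every $x\in X$ and every $\tau>0$ (with $\tau<(-\lambda)^{-1}$ in case (2)), the set $\mathcal J^f_\tau(x)$ is nonempty. Moreover, in case (2) with $\tau<(-\lambda)^{-1}$, $\mathcal J^f_\tau(x)$ consists of exactly one point.
   Context: A metric space is geodesic if any two points $x,y$ are joined by a curve $\gamma:[0,1]\to X$ with $\gamma(0)=x$, $\gamma(1)=y$, $d(\gamma(s),\gamma(t))=|t-s|d(x,y)$ (a minimal geodesic). A geodesic metric space $(X,d)$ is a $\mathrm{CAT}(0)$-space if for all $x,y,z\in X$ and every minimal geodesic $\gamma$ from $y$ to $z$, $d^2(x,\gamma(s))\le(1-s)d^2(x,y)+sd^2(x,z)-(1-s)sd^2(y,z)$ for all $s\in[0,1]$; then minimal geodesics are unique, denoted $\gamma_{xy}$. $f$ is quasi-convex if $f(\gamma_{xy}(s))\le\max\{f(x),f(y)\}$ for all $x,y\in X$, $s\in(0,1)$; $f$ is $\lambda$-convex if $f(\gamma_{xy}(s))\le(1-s)f(x)+sf(y)-\frac{\lambda}{2}(1-s)sd^2(x,y)$ for all $x,y$, $s\in(0,1)$. For $\tau>0$, $f_\tau(x):=\inf_{z\in X}\{f(z)+d^2(x,z)/(2\tau)\}$ and $\mathcal J^f_\tau(x):=\{z\in X: f(z)+d^2(x,z)/(2\tau)=f_\tau(x)\}$.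 *)

theory Defs
  imports "HOL-Analysis.Analysis"
begin

definition min_geodesic :: "(real \<Rightarrow> 'a::metric_space) \<Rightarrow> 'a \<Rightarrow> 'a \<Rightarrow> bool" where
  "min_geodesic \<gamma> x y \<longleftrightarrow> \<gamma> 0 = x \<and> \<gamma> 1 = y \<and>
     (\<forall>s\<in>{0..1}. \<forall>t\<in>{0..1}. dist (\<gamma> s) (\<gamma> t) = \<bar>t - s\<bar> * dist x y)"

definition geodesic_space :: "'a::metric_space itself \<Rightarrow> bool" where
  "geodesic_space _ \<longleftrightarrow> (\<forall>x y::'a. \<exists>\<gamma>. min_geodesic \<gamma> x y)"

definition CAT0 :: "'a::metric_space itself \<Rightarrow> bool" where
  "CAT0 T \<longleftrightarrow> geodesic_space T \<and>
     (\<forall>x y z::'a. \<forall>\<gamma>. min_geodesic \<gamma> y z \<longrightarrow>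
        (\<forall>s\<in>{0..1}. (dist x (\<gamma> s))\<^sup>2 \<le> (1 - s) * (dist x y)\<^sup>2 + s * (dist x z)\<^sup>2
                                     - (1 - s) * s * (dist y z)\<^sup>2))"

definition lower_semicontinuous :: "('a::topological_space \<Rightarrow> real) \<Rightarrow> bool" where
  "lower_semicontinuous f \<longleftrightarrow> (\<forall>x c. c < f x \<longrightarrow> (\<forall>\<^sub>F y in nhds x. c < f y))"

definition quasi_convex :: "('a::metric_space \<Rightarrow> real) \<Rightarrow> bool" where
  "quasi_convex f \<longleftrightarrow> (\<forall>x y \<gamma>. min_geodesic \<gamma> x y \<longrightarrow>
      (\<forall>s\<in>{0<..<1}. f (\<gamma> s) \<le> max (f x) (f y)))"

definition lambda_convex :: "real \<Rightarrow> ('a::metric_space \<Rightarrow> real) \<Rightarrow> bool" where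
  "lambda_convex lam f \<longleftrightarrow> (\<forall>x y \<gamma>. min_geodesic \<gamma> x y \<longrightarrow>
      (\<forall>s\<in>{0<..<1}. f (\<gamma> s) \<le> (1 - s) * f x + s * f y - lam / 2 * (1 - s) * s * (dist x y)\<^sup>2))"

definition moreau :: "('a::metric_space \<Rightarrow> real) \<Rightarrow> real \<Rightarrow> 'a \<Rightarrow> real" where
  "moreau f \<tau> x = (INF z. f z + (dist x z)\<^sup>2 / (2 * \<tau>))"

definition resolvent :: "('a::metric_space \<Rightarrow> real) \<Rightarrow> real \<Rightarrow> 'a \<Rightarrow> 'a set" where
  "resolvent f \<tau> x = {z. f z + (dist x z)\<^sup>2 / (2 * \<tau>) = moreau f \<tau> x}"

end

theory Submission
  imports Defs
begin

text \<open>
  Take a minimizing sequence \<open>z\<^sub>n\<close> of \<open>z \<mapsto> f z + d(x,z)\<^sup>2/(2\<tau>)\<close>. A lower bound on \<open>f\<close>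
  (global, or, for \<open>\<lambda>\<close>-convex \<open>f\<close>, a quadratic minorant obtained from lower semicontinuity at \<open>x\<close>)
  keeps it bounded, so along a subsequence \<open>f(z\<^sub>n) \<rightarrow> c\<close> and \<open>d(x,z\<^sub>n) \<rightarrow> d\<close> with
  \<open>c + d\<^sup>2/(2\<tau>)\<close> at most the infimum. No compactness is available, so a point realizing \<open>(c,d)\<close> is found
  instead in the nested closed sublevel sets \<open>{f \<le> c + 1/(n+1)}\<close>, which are geodesically convex by
  quasi-convexity: by the CAT(0) inequality at the midpoint, almost-nearest points to \<open>x\<close> in these
  sets form a Cauchy sequence, whose limit lies in all of them at distance at most \<open>d\<close> from \<open>x\<close>.
  Uniqueness for \<open>\<lambda>\<close>-convex \<open>f\<close> and \<open>\<tau> < 1/(-\<lambda>)\<close>: the objective is then strictly convex at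
  midpoints, with modulus \<open>\<lambda> + 1/\<tau> > 0\<close>.
\<close>

lemma CAT0_geodesicE:
  assumes "CAT0 TYPE('a::metric_space)"
  obtains \<gamma> where "min_geodesic \<gamma> (y::'a) z"
  using assms unfolding CAT0_def geodesic_space_def by blast

lemma CAT0_midpoint_dist:
  assumes "CAT0 TYPE('a::metric_space)" and "min_geodesic \<gamma> (y::'a) z"
  shows "(dist x (\<gamma> (1/2)))\<^sup>2 \<le> (dist x y)\<^sup>2 / 2 + (dist x z)\<^sup>2 / 2 - (dist y z)\<^sup>2 / 4"
proof -
  have "(dist x (\<gamma> s))\<^sup>2 \<le> (1 - s) * (dist x y)\<^sup>2 + s * (dist x z)\<^sup>2 - (1 - s) * s * (dist y z)\<^sup>2"
    if "s \<in> {0..1}" for s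
    using assms that unfolding CAT0_def by blast
  from this[of "1/2"] show ?thesis by simp
qed

lemma min_geodesic_dist_start:
  assumes "min_geodesic \<gamma> x y" and "s \<in> {0..1}"
  shows "dist x (\<gamma> s) = s * dist x y"
proof -
  have "\<gamma> 0 = x" and dist: "\<forall>a\<in>{0..1}. \<forall>b\<in>{0..1}. dist (\<gamma> a) (\<gamma> b) = \<bar>b - a\<bar> * dist x y"
    using assms(1) unfolding min_geodesic_def by blast+
  moreover have "dist (\<gamma> 0) (\<gamma> s) = \<bar>s - 0\<bar> * dist x y"
    using dist assms(2) by (meson atLeastAtMost_iff order.refl zero_le_one)
  ultimately show ?thesis using assms(2) by simp
qed

definition geodesically_convex :: "'a::metric_space set \<Rightarrow> bool" where
  "geodesically_convex K \<longleftrightarrow>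
     (\<forall>x\<in>K. \<forall>y\<in>K. \<forall>\<gamma>. min_geodesic \<gamma> x y \<longrightarrow> (\<forall>s\<in>{0..1}. \<gamma> s \<in> K))"

lemma geodesically_convexD:
  assumes "geodesically_convex K" and "x \<in> K" "y \<in> K" and "min_geodesic \<gamma> x y" and "s \<in> {0..1}"
  shows "\<gamma> s \<in> K"
  using assms unfolding geodesically_convex_def by blast

lemma geodesically_convex_sublevel:
  assumes "quasi_convex f"
  shows "geodesically_convex {z. f z \<le> a}"
  unfolding geodesically_convex_def
proof (intro ballI allI impI)
  fix x y \<gamma> and s :: real
  assume x: "x \<in> {z. f z \<le> a}" and y: "y \<in> {z. f z \<le> a}"
    and \<gamma>: "min_geodesic \<gamma> x y" and s: "s \<in> {0..1}"
  have ends: "\<gamma> 0 = x" "\<gamma> 1 = y" using \<gamma> unfolding min_geodesic_def by blast+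
  consider "s = 0" | "s = 1" | "s \<in> {0<..<1}" using s by fastforce
  then show "\<gamma> s \<in> {z. f z \<le> a}"
  proof cases
    case 3
    then have "f (\<gamma> s) \<le> max (f x) (f y)"
      using assms \<gamma> unfolding quasi_convex_def by blast
    with x y show ?thesis by simp
  qed (use x y ends in simp_all)
qed

lemma closed_sublevel:
  assumes "lower_semicontinuous f"
  shows "closed {z. f z \<le> a}"
proof -
  have "open {z. a < f z}"
  proof (rule Topological_Spaces.openI)
    fix y assume "y \<in> {z. a < f z}"
    then have "\<forall>\<^sub>F z in nhds y. a < f z"
      using assms unfolding lower_semicontinuous_def by auto
    then show "\<exists>T. open T \<and> y \<in> T \<and> T \<subseteq> {z. a < f z}"
      unfolding eventually_nhds by auto
  qed
  moreover have "- {z. f z \<le> a} = {z. a < f z}" by auto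
  ultimately show ?thesis by (simp add: closed_def)
qed

lemma Cauchy_tail_bound:
  fixes z :: "nat \<Rightarrow> 'a::metric_space"
  assumes "\<And>n k. n \<le> k \<Longrightarrow> dist (z n) (z k) \<le> h n" and "h \<longlonglongrightarrow> 0"
  shows "Cauchy z"
  unfolding Cauchy_altdef2
proof (intro allI impI)
  fix \<epsilon> :: real assume "\<epsilon> > 0"
  then obtain N where "h N < \<epsilon>"
    using order_tendstoD(2)[OF assms(2)] by (auto simp: eventually_sequentially)
  then show "\<exists>N. \<forall>n\<ge>N. dist (z n) (z N) < \<epsilon>"
    using assms(1) by (metis dist_commute order.strict_trans1)
qed

lemma infdist_approx:
  assumes "A \<noteq> {}" and "e > 0"
  obtains a where "a \<in> A" "dist x a < infdist x A + e"
proof -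
  have "(INF a\<in>A. dist x a) < infdist x A + e"
    using assms by (simp add: infdist_notempty)
  then show ?thesis
    using that assms(1) by (auto simp: cINF_less_iff)
qed

lemma CAT0_convex_dist_le:
  fixes K :: "'a::metric_space set"
  assumes "CAT0 TYPE('a)" and "geodesically_convex K" and "y \<in> K" "z \<in> K"
  shows "(dist y z)\<^sup>2 \<le> 2 * (dist x y)\<^sup>2 + 2 * (dist x z)\<^sup>2 - 4 * (infdist x K)\<^sup>2"
proof -
  obtain \<gamma> where \<gamma>: "min_geodesic \<gamma> y z" using CAT0_geodesicE[OF assms(1)] by blast
  then have "\<gamma> (1/2) \<in> K" by (rule geodesically_convexD[OF assms(2-4)]) simp
  then have "infdist x K \<le> dist x (\<gamma> (1/2))" by (rule infdist_le)
  then have "(infdist x K)\<^sup>2 \<le> (dist x (\<gamma> (1/2)))\<^sup>2"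
    using infdist_nonneg by (rule power_mono)
  with CAT0_midpoint_dist[OF assms(1) \<gamma>, of x] show ?thesis by linarith
qed

lemma CAT0_decseq_convex_almost_nearest_Cauchy:
  fixes x :: "'a::metric_space" and K :: "nat \<Rightarrow> 'a set"
  assumes cat: "CAT0 TYPE('a)" and dec: "decseq K" and convex: "\<And>n. geodesically_convex (K n)"
    and zK: "\<And>n. z n \<in> K n" and R: "(\<lambda>n. infdist x (K n)) \<longlonglongrightarrow> R"
    and z_le: "\<And>n k. n \<le> k \<Longrightarrow> dist x (z k) \<le> R + e n" and e: "e \<longlonglongrightarrow> 0"
  shows "Cauchy z"
proof (rule Cauchy_tail_bound)
  fix n k :: nat assume "n \<le> k"
  have "(dist (z n) (z k))\<^sup>2 \<le> 2 * (dist x (z n))\<^sup>2 + 2 * (dist x (z k))\<^sup>2 - 4 * (infdist x (K n))\<^sup>2"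
    using CAT0_convex_dist_le[OF cat convex zK] zK[of k] decseqD[OF dec \<open>n \<le> k\<close>] by auto
  also have "\<dots> \<le> 4 * (R + e n)\<^sup>2 - 4 * (infdist x (K n))\<^sup>2"
    using power_mono[OF z_le[OF order.refl, of n] zero_le_dist, of 2]
      power_mono[OF z_le[OF \<open>n \<le> k\<close>] zero_le_dist, of 2]
    by linarith
  finally show "dist (z n) (z k) \<le> sqrt (4 * (R + e n)\<^sup>2 - 4 * (infdist x (K n))\<^sup>2)"
    by (rule real_le_rsqrt)
next
  have "(\<lambda>n. sqrt (4 * (R + e n)\<^sup>2 - 4 * (infdist x (K n))\<^sup>2)) \<longlonglongrightarrow> sqrt (4 * (R + 0)\<^sup>2 - 4 * R\<^sup>2)"
    by (intro tendsto_intros R e)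
  then show "(\<lambda>n. sqrt (4 * (R + e n)\<^sup>2 - 4 * (infdist x (K n))\<^sup>2)) \<longlonglongrightarrow> 0" by simp
qed

lemma CAT0_decseq_convex_common_point:
  fixes x :: "'a::complete_space" and K :: "nat \<Rightarrow> 'a set"
  assumes cat: "CAT0 TYPE('a)" and dec: "decseq K" and closed: "\<And>n. closed (K n)"
    and convex: "\<And>n. geodesically_convex (K n)" and nonempty: "\<And>n. K n \<noteq> {}"
    and near: "\<And>n. infdist x (K n) \<le> \<rho>"
  shows "\<exists>p. (\<forall>n. p \<in> K n) \<and> dist x p \<le> \<rho>"
proof -
  define r where "r n = infdist x (K n)" for n
  define e where "e n = inverse (real (Suc n))" for n
  have "incseq r"
    using dec nonempty by (auto simp: incseq_def decseq_def r_def intro!: infdist_mono)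
  then obtain R where rR: "r \<longlonglongrightarrow> R" and r_le: "\<And>n. r n \<le> R"
    using incseq_convergent[of r \<rho>] near by (auto simp: r_def)
  have "R \<le> \<rho>" using rR near by (intro LIMSEQ_le_const2) (auto simp: r_def)
  have e_lim: "e \<longlonglongrightarrow> 0" unfolding e_def by (rule LIMSEQ_inverse_real_of_nat)
  have "\<forall>n. \<exists>a. a \<in> K n \<and> dist x a < r n + e n"
    unfolding r_def e_def by (metis infdist_approx nonempty positive_imp_inverse_positive of_nat_0_less_iff zero_less_Suc)
  then obtain z where zK: "\<And>n. z n \<in> K n" and z_near: "\<And>n. dist x (z n) < r n + e n"
    by metis
  have z_le: "dist x (z k) \<le> R + e n" if "n \<le> k" for n k
  proof -
    have "e k \<le> e n" using that by (simp add: e_def le_imp_inverse_le)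
    then show ?thesis using z_near[of k] r_le[of k] by linarith
  qed
  have "Cauchy z"
    using CAT0_decseq_convex_almost_nearest_Cauchy[OF cat dec convex zK _ z_le e_lim] rR
    by (simp add: r_def[abs_def])
  then obtain p where zp: "z \<longlonglongrightarrow> p" using Cauchy_convergent_iff convergent_def by blast
  have "p \<in> K n" for n
  proof (rule Lim_in_closed_set[OF closed _ trivial_limit_sequentially zp])
    show "\<forall>\<^sub>F k in sequentially. z k \<in> K n"
      unfolding eventually_sequentially using zK dec by (metis decseqD subsetD)
  qed
  moreover have "dist x p \<le> R"
  proof (rule tendsto_le[OF trivial_limit_sequentially])
    show "(\<lambda>n. R + e n) \<longlonglongrightarrow> R" using tendsto_add[OF tendsto_const e_lim, of R] by simp
    show "(\<lambda>n. dist x (z n)) \<longlonglongrightarrow> dist x p" by (intro tendsto_intros zp)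
    show "\<forall>\<^sub>F n in sequentially. dist x (z n) \<le> R + e n" using z_le by simp
  qed
  ultimately show ?thesis using \<open>R \<le> \<rho>\<close> by force
qed

lemma CAT0_sublevel_point:
  fixes f :: "'a::complete_space \<Rightarrow> real"
  assumes cat: "CAT0 TYPE('a)" and lsc: "lower_semicontinuous f" and qc: "quasi_convex f"
    and approx: "\<And>\<epsilon>. \<epsilon> > 0 \<Longrightarrow> \<exists>z. f z \<le> c + \<epsilon> \<and> dist x z \<le> \<rho> + \<epsilon>"
  shows "\<exists>p. f p \<le> c \<and> dist x p \<le> \<rho>"
proof -
  define K where "K n = {z. f z \<le> c + inverse (real (Suc n))}" for n
  have "inverse (real (Suc n)) \<le> inverse (real (Suc m))" if "m \<le> n" for m n
    using that by (simp add: le_imp_inverse_le)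
  then have dec: "decseq K"
    unfolding decseq_def K_def by (smt (verit) mem_Collect_eq subsetI)
  have nonempty: "K n \<noteq> {}" for n
    using approx[of "inverse (real (Suc n))"] by (auto simp: K_def)
  have near: "infdist x (K n) \<le> \<rho>" for n
  proof (rule field_le_epsilon)
    fix \<epsilon> :: real assume "\<epsilon> > 0"
    then obtain z where "f z \<le> c + min \<epsilon> (inverse (real (Suc n)))"
      and "dist x z \<le> \<rho> + min \<epsilon> (inverse (real (Suc n)))"
      using approx[of "min \<epsilon> (inverse (real (Suc n)))"] by auto
    then show "infdist x (K n) \<le> \<rho> + \<epsilon>"
      by (intro infdist_le2[of z]) (auto simp: K_def)
  qed
  have "closed (K n)" "geodesically_convex (K n)" for n
    unfolding K_def by (rule closed_sublevel[OF lsc], rule geodesically_convex_sublevel[OF qc])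
  then obtain p where p: "\<And>n. p \<in> K n" and "dist x p \<le> \<rho>"
    using CAT0_decseq_convex_common_point[OF cat dec _ _ nonempty near] by metis
  moreover have "f p \<le> c"
  proof (rule field_le_epsilon)
    fix \<epsilon> :: real assume "\<epsilon> > 0"
    then obtain n where "inverse (real (Suc n)) < \<epsilon>" using reals_Archimedean by blast
    then show "f p \<le> c + \<epsilon>" using p[of n] by (simp add: K_def)
  qed
  ultimately show ?thesis by blast
qed

definition prox_objective :: "('a::metric_space \<Rightarrow> real) \<Rightarrow> real \<Rightarrow> 'a \<Rightarrow> 'a \<Rightarrow> real" where
  "prox_objective f \<tau> x z = f z + (dist x z)\<^sup>2 / (2 * \<tau>)"

lemma mem_resolvent_iff: "z \<in> resolvent f \<tau> x \<longleftrightarrow> prox_objective f \<tau> x z = moreau f \<tau> x"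
  by (simp add: resolvent_def prox_objective_def)

lemma moreau_eq_INF: "moreau f \<tau> x = (INF z. prox_objective f \<tau> x z)"
  by (simp add: moreau_def prox_objective_def)

lemma moreau_le_prox_objective:
  assumes "bdd_below (range (prox_objective f \<tau> x))"
  shows "moreau f \<tau> x \<le> prox_objective f \<tau> x z"
  unfolding moreau_eq_INF using assms by (rule cINF_lower) simp

lemma bdd_below_prox_objective:
  assumes "\<beta> \<ge> 0" and "\<And>z. \<alpha> + \<beta> * (dist x z)\<^sup>2 \<le> prox_objective f \<tau> x z"
  shows "bdd_below (range (prox_objective f \<tau> x))"
proof (rule bdd_belowI2)
  fix z
  show "\<alpha> \<le> prox_objective f \<tau> x z"
    using assms(2)[of z] mult_nonneg_nonneg[OF assms(1) zero_le_power2[of "dist x z"]] by linarith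
qed

lemma moreau_minimizing_sequence:
  assumes "bdd_below (range (prox_objective f \<tau> x))"
  obtains z where "\<And>n. prox_objective f \<tau> x (z n) < moreau f \<tau> x + inverse (real (Suc n))"
proof -
  have "\<exists>z. prox_objective f \<tau> x z < moreau f \<tau> x + inverse (real (Suc n))" for n
  proof -
    have "(INF z. prox_objective f \<tau> x z) < moreau f \<tau> x + inverse (real (Suc n))"
      by (simp add: moreau_eq_INF)
    then show ?thesis by (simp add: cINF_less_iff[OF UNIV_not_empty assms])
  qed
  then show ?thesis using that by metis
qed

lemma minimizing_sequence_bounded:
  fixes f :: "'a::metric_space \<Rightarrow> real"
  assumes "\<tau> > 0" and "\<beta> > 0" and coercive: "\<And>z. \<alpha> + \<beta> * (dist x z)\<^sup>2 \<le> prox_objective f \<tau> x z"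
    and bdd_ball: "\<And>B. bdd_below (f ` cball x B)"
    and G_le: "\<And>n. prox_objective f \<tau> x (z n) \<le> M"
  shows "bounded (range (\<lambda>n. (f (z n), dist x (z n))))"
proof -
  define B where "B = sqrt ((M - \<alpha>) / \<beta>)"
  have "dist x (z n) \<le> B" for n
    unfolding B_def using coercive[of "z n"] G_le[of n] \<open>\<beta> > 0\<close>
    by (intro real_le_rsqrt) (simp add: le_divide_eq mult.commute)
  moreover obtain C where "\<And>y. dist x y \<le> B \<Longrightarrow> C \<le> f y"
    using bdd_ball[of B] unfolding bdd_below_def by (meson image_eqI mem_cball)
  moreover have "f (z n) \<le> M" for n
  proof -
    have "0 \<le> (dist x (z n))\<^sup>2 / (2 * \<tau>)" using \<open>\<tau> > 0\<close> by simp
    then show ?thesis using G_le[of n] unfolding prox_objective_def by linarith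
  qed
  ultimately have "range (\<lambda>n. (f (z n), dist x (z n))) \<subseteq> {C..M} \<times> {0..B}" by auto
  then show ?thesis using bounded_subset bounded_Times bounded_closed_interval by metis
qed

lemma moreau_limit_values:
  fixes f :: "'a::metric_space \<Rightarrow> real"
  assumes "\<tau> > 0" and "\<beta> > 0" and coercive: "\<And>z. \<alpha> + \<beta> * (dist x z)\<^sup>2 \<le> prox_objective f \<tau> x z"
    and bdd_ball: "\<And>B. bdd_below (f ` cball x B)"
  obtains c d where "c + d\<^sup>2 / (2 * \<tau>) \<le> moreau f \<tau> x"
    and "\<And>\<epsilon>. \<epsilon> > 0 \<Longrightarrow> \<exists>z. f z \<le> c + \<epsilon> \<and> dist x z \<le> d + \<epsilon>"
proof -
  let ?G = "prox_objective f \<tau> x" and ?e = "\<lambda>n. inverse (real (Suc n))"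
  define m where "m = moreau f \<tau> x"
  have bdd: "bdd_below (range ?G)"
    using bdd_below_prox_objective[OF less_imp_le[OF \<open>\<beta> > 0\<close>] coercive] .
  obtain z where z: "\<And>n. ?G (z n) < m + ?e n"
    using moreau_minimizing_sequence[OF bdd] unfolding m_def by blast
  have "?G (z n) \<le> m + 1" for n
    using z[of n] inverse_le_1_iff[of "real (Suc n)"] by linarith
  then have "bounded (range (\<lambda>n. (f (z n), dist x (z n))))"
    by (rule minimizing_sequence_bounded[OF assms])
  then obtain r c d where r: "strict_mono r"
    and lim: "((\<lambda>n. (f (z n), dist x (z n))) \<circ> r) \<longlonglongrightarrow> (c, d)"
    using bounded_imp_convergent_subsequence by (metis surj_pair)
  have fc: "(\<lambda>n. f (z (r n))) \<longlonglongrightarrow> c" and dd: "(\<lambda>n. dist x (z (r n))) \<longlonglongrightarrow> d"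
    using tendsto_fst[OF lim] tendsto_snd[OF lim] by (simp_all add: o_def)
  show ?thesis
  proof
    show "c + d\<^sup>2 / (2 * \<tau>) \<le> moreau f \<tau> x"
    proof (rule tendsto_le[OF trivial_limit_sequentially])
      show "(\<lambda>n. m + ?e (r n)) \<longlonglongrightarrow> moreau f \<tau> x"
        using LIMSEQ_subseq_LIMSEQ[OF tendsto_add[OF tendsto_const LIMSEQ_inverse_real_of_nat] r]
        by (simp add: m_def o_def)
      show "(\<lambda>n. ?G (z (r n))) \<longlonglongrightarrow> c + d\<^sup>2 / (2 * \<tau>)"
        unfolding prox_objective_def by (intro tendsto_intros fc dd) (use \<open>\<tau> > 0\<close> in auto)
      show "\<forall>\<^sub>F n in sequentially. ?G (z (r n)) \<le> m + ?e (r n)"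
        using z by (intro always_eventually allI less_imp_le)
    qed
  next
    fix \<epsilon> :: real assume "\<epsilon> > 0"
    have "\<forall>\<^sub>F n in sequentially. dist (f (z (r n))) c < \<epsilon> \<and> dist (dist x (z (r n))) d < \<epsilon>"
      using tendstoD[OF fc \<open>\<epsilon> > 0\<close>] tendstoD[OF dd \<open>\<epsilon> > 0\<close>] by (rule eventually_conj)
    then obtain n where "dist (f (z (r n))) c < \<epsilon>" "dist (dist x (z (r n))) d < \<epsilon>"
      unfolding eventually_sequentially by blast
    then show "\<exists>z. f z \<le> c + \<epsilon> \<and> dist x z \<le> d + \<epsilon>"
      by (auto simp: dist_real_def abs_less_iff intro!: exI[of _ "z (r n)"])
  qed
qed

lemma resolvent_nonempty:
  fixes f :: "'a::complete_space \<Rightarrow> real"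
  assumes "CAT0 TYPE('a)" and "lower_semicontinuous f" and "quasi_convex f"
    and "\<tau> > 0" and "\<beta> > 0" and coercive: "\<And>z. \<alpha> + \<beta> * (dist x z)\<^sup>2 \<le> prox_objective f \<tau> x z"
    and "\<And>B. bdd_below (f ` cball x B)"
  shows "resolvent f \<tau> x \<noteq> {}"
proof -
  obtain c d where cd: "c + d\<^sup>2 / (2 * \<tau>) \<le> moreau f \<tau> x"
    and "\<And>\<epsilon>. \<epsilon> > 0 \<Longrightarrow> \<exists>z. f z \<le> c + \<epsilon> \<and> dist x z \<le> d + \<epsilon>"
    using moreau_limit_values[OF assms(4-)] by blast
  then obtain p where "f p \<le> c" "dist x p \<le> d"
    using CAT0_sublevel_point[OF assms(1-3)] by blast
  then have "prox_objective f \<tau> x p \<le> c + d\<^sup>2 / (2 * \<tau>)"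
    using \<open>\<tau> > 0\<close> power_mono[OF \<open>dist x p \<le> d\<close> zero_le_dist, of 2]
    by (simp add: prox_objective_def divide_right_mono add_mono)
  with cd moreau_le_prox_objective[OF bdd_below_prox_objective[OF _ coercive]] \<open>\<beta> > 0\<close>
  have "p \<in> resolvent f \<tau> x"
    unfolding mem_resolvent_iff by (meson antisym less_imp_le order_trans)
  then show ?thesis by blast
qed

lemma lambda_convex_le_chord:
  assumes "lambda_convex lam f" and "lam \<le> 0" and "min_geodesic \<gamma> x z" and "s \<in> {0<..<1}"
  shows "f (\<gamma> s) \<le> (1 - s) * f x + s * (f z - lam / 2 * (dist x z)\<^sup>2)"
proof -
  define Q where "Q = lam / 2 * (dist x z)\<^sup>2"
  have "f (\<gamma> s) \<le> (1 - s) * f x + s * f z - lam / 2 * (1 - s) * s * (dist x z)\<^sup>2"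
    using assms(1,3,4) unfolding lambda_convex_def by blast
  moreover have "lam / 2 * (1 - s) * s * (dist x z)\<^sup>2 = s * Q - s * (s * Q)"
    by (simp add: Q_def field_simps)
  moreover have "s * (s * Q) \<le> 0"
    using assms(2,4) by (simp add: Q_def mult_nonneg_nonpos mult_nonpos_nonneg)
  moreover have "s * (f z - Q) = s * f z - s * Q" by (simp add: algebra_simps)
  ultimately show ?thesis unfolding Q_def[symmetric] by linarith
qed

lemma lambda_convex_quadratic_minorant:
  fixes f :: "'a::metric_space \<Rightarrow> real"
  assumes cat: "CAT0 TYPE('a)" and lsc: "lower_semicontinuous f"
    and lc: "lambda_convex lam f" and lam: "lam \<le> 0"
  obtains a b where "b \<ge> 0" "\<And>z. a - b * dist x z + lam / 2 * (dist x z)\<^sup>2 \<le> f z"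
proof -
  have "\<forall>\<^sub>F y in nhds x. f x - 1 < f y" using lsc unfolding lower_semicontinuous_def by simp
  then obtain \<delta> where "\<delta> > 0" and near: "\<And>y. dist y x < \<delta> \<Longrightarrow> f x - 1 < f y"
    unfolding eventually_nhds_metric by blast
  have "f x - 1 - 2 / \<delta> * dist x z + lam / 2 * (dist x z)\<^sup>2 \<le> f z" for z
  proof (cases "dist x z < \<delta>")
    case True
    then have "f x - 1 < f z" using near[of z] by (simp add: dist_commute)
    moreover have "0 \<le> 2 / \<delta> * dist x z" using \<open>\<delta> > 0\<close> by simp
    moreover have "lam / 2 * (dist x z)\<^sup>2 \<le> 0" using lam by (simp add: mult_nonpos_nonneg)
    ultimately show ?thesis by linarith
  next
    case False
    define D where "D = dist x z"
    define s where "s = \<delta> / (2 * D)"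
    have "D > 0" "\<delta> \<le> D" using False \<open>\<delta> > 0\<close> by (auto simp: D_def)
    then have s: "s \<in> {0<..<1}" "s * D = \<delta> / 2" "s * (2 / \<delta> * D) = 1"
      using \<open>\<delta> > 0\<close> by (auto simp: s_def field_simps)
    obtain \<gamma> where \<gamma>: "min_geodesic \<gamma> x z" using CAT0_geodesicE[OF cat] by blast
    have "dist x (\<gamma> s) = s * D" using min_geodesic_dist_start[OF \<gamma>] s(1) by (simp add: D_def)
    then have "f x - 1 < f (\<gamma> s)" using near[of "\<gamma> s"] s(2) \<open>\<delta> > 0\<close> by (simp add: dist_commute)
    also have "\<dots> \<le> (1 - s) * f x + s * (f z - lam / 2 * D\<^sup>2)"
      using lambda_convex_le_chord[OF lc lam \<gamma> s(1)] by (simp add: D_def)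
    finally have "f x - 1 < (1 - s) * f x + s * (f z - lam / 2 * D\<^sup>2)" .
    moreover have "s * (f x - f z + lam / 2 * D\<^sup>2) = f x - ((1 - s) * f x + s * (f z - lam / 2 * D\<^sup>2))"
      by (simp add: algebra_simps)
    ultimately have "s * (f x - f z + lam / 2 * D\<^sup>2) < s * (2 / \<delta> * D)"
      unfolding s(3) by linarith
    then have "f x - f z + lam / 2 * D\<^sup>2 < 2 / \<delta> * D"
      using s(1) by (meson greaterThanLessThan_iff mult_less_cancel_left_pos)
    then show ?thesis unfolding D_def by linarith
  qed
  with \<open>\<delta> > 0\<close> show ?thesis using that[of "2 / \<delta>" "f x - 1"] by simp
qed

lemma bdd_below_cball_quadratic_minorant:
  assumes "\<And>z. a - b * dist x z + lam / 2 * (dist x z)\<^sup>2 \<le> f z" and "b \<ge> 0" and "lam \<le> 0"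
  shows "bdd_below (f ` cball x B)"
proof (rule bdd_belowI2)
  fix z assume "z \<in> cball x B"
  then have "dist x z \<le> B" by simp
  then have "b * dist x z \<le> b * B" and "(dist x z)\<^sup>2 \<le> B\<^sup>2"
    using assms(2) by (auto intro: mult_left_mono power_mono)
  moreover have "lam / 2 * B\<^sup>2 \<le> lam / 2 * (dist x z)\<^sup>2"
    using calculation(2) assms(3) by (intro mult_left_mono_neg) auto
  ultimately show "a - b * B + lam / 2 * B\<^sup>2 \<le> f z" using assms(1)[of z] by linarith
qed

lemma prox_objective_coercive:
  assumes "\<And>z. a - b * dist x z + lam / 2 * (dist x z)\<^sup>2 \<le> f z" and "\<tau> > 0" and "lam + 1 / \<tau> > 0"
  shows "a - b\<^sup>2 / (lam + 1 / \<tau>) + (lam + 1 / \<tau>) / 4 * (dist x z)\<^sup>2 \<le> prox_objective f \<tau> x z"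
proof -
  define \<kappa> d where "\<kappa> = lam + 1 / \<tau>" and "d = dist x z"
  have "0 \<le> (\<kappa> * d / 2 - b)\<^sup>2 / \<kappa>" using assms(3) by (simp add: \<kappa>_def)
  also have "\<dots> = \<kappa> / 4 * d\<^sup>2 - b * d + b\<^sup>2 / \<kappa>"
    using assms(3) by (simp add: \<kappa>_def field_simps power2_eq_square)
  finally have "b * d \<le> \<kappa> / 4 * d\<^sup>2 + b\<^sup>2 / \<kappa>" by linarith
  moreover have "prox_objective f \<tau> x z = f z + d\<^sup>2 / (2 * \<tau>)" by (simp add: prox_objective_def d_def)
  moreover have "lam / 2 * d\<^sup>2 + d\<^sup>2 / (2 * \<tau>) = \<kappa> / 2 * d\<^sup>2"
    using assms(2) by (simp add: \<kappa>_def field_simps)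
  ultimately show ?thesis using assms(1)[of z] unfolding \<kappa>_def[symmetric] d_def[symmetric] by linarith
qed

lemma prox_objective_midpoint:
  fixes f :: "'a::metric_space \<Rightarrow> real"
  assumes "CAT0 TYPE('a)" and "lambda_convex lam f" and "\<tau> > 0" and \<gamma>: "min_geodesic \<gamma> y z"
  shows "prox_objective f \<tau> x (\<gamma> (1/2))
    \<le> (prox_objective f \<tau> x y + prox_objective f \<tau> x z) / 2 - (lam + 1 / \<tau>) / 8 * (dist y z)\<^sup>2"
proof -
  have "\<forall>s\<in>{0<..<1}. f (\<gamma> s) \<le> (1 - s) * f y + s * f z - lam / 2 * (1 - s) * s * (dist y z)\<^sup>2"
    using assms(2) \<gamma> unfolding lambda_convex_def by blast
  moreover have "(1/2 :: real) \<in> {0<..<1}" by simp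
  ultimately have "f (\<gamma> (1/2)) \<le> (1 - 1/2) * f y + 1/2 * f z - lam / 2 * (1 - 1/2) * (1/2) * (dist y z)\<^sup>2"
    by (rule bspec)
  then have "f (\<gamma> (1/2)) \<le> f y / 2 + f z / 2 - lam / 8 * (dist y z)\<^sup>2" by simp
  moreover have "(dist x (\<gamma> (1/2)))\<^sup>2 / (2 * \<tau>)
      \<le> ((dist x y)\<^sup>2 / 2 + (dist x z)\<^sup>2 / 2 - (dist y z)\<^sup>2 / 4) / (2 * \<tau>)"
    using CAT0_midpoint_dist[OF assms(1) \<gamma>] assms(3) by (simp add: divide_right_mono)
  moreover have "(prox_objective f \<tau> x y + prox_objective f \<tau> x z) / 2 - (lam + 1 / \<tau>) / 8 * (dist y z)\<^sup>2
      = f y / 2 + f z / 2 - lam / 8 * (dist y z)\<^sup>2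
        + ((dist x y)\<^sup>2 / 2 + (dist x z)\<^sup>2 / 2 - (dist y z)\<^sup>2 / 4) / (2 * \<tau>)"
    using assms(3) by (simp add: prox_objective_def field_simps)
  ultimately show ?thesis unfolding prox_objective_def by linarith
qed

lemma resolvent_subsingleton:
  fixes f :: "'a::metric_space \<Rightarrow> real"
  assumes "CAT0 TYPE('a)" and "lambda_convex lam f" and "\<tau> > 0" and "lam + 1 / \<tau> > 0"
    and "bdd_below (range (prox_objective f \<tau> x))"
    and "y \<in> resolvent f \<tau> x" and "z \<in> resolvent f \<tau> x"
  shows "y = z"
proof -
  obtain \<gamma> where \<gamma>: "min_geodesic \<gamma> y z" using CAT0_geodesicE[OF assms(1)] by blast
  have "moreau f \<tau> x \<le> prox_objective f \<tau> x (\<gamma> (1/2))"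
    by (rule moreau_le_prox_objective[OF assms(5)])
  also have "\<dots> \<le> moreau f \<tau> x - (lam + 1 / \<tau>) / 8 * (dist y z)\<^sup>2"
    using prox_objective_midpoint[OF assms(1-3) \<gamma>, of x] assms(6,7) by (simp add: mem_resolvent_iff)
  finally have "(lam + 1 / \<tau>) / 8 * (dist y z)\<^sup>2 \<le> 0" by simp
  then have "(dist y z)\<^sup>2 \<le> 0" using assms(4) by (simp add: mult_le_0_iff)
  then show "y = z" by simp
qed

theorem mainTheorem11:
  fixes f :: "'a::complete_space \<Rightarrow> real"
  assumes "CAT0 TYPE('a)"
    and "lower_semicontinuous f"
    and "quasi_convex f"
  shows "(bdd_below (range f) \<longrightarrow> (\<forall>x \<tau>. \<tau> > 0 \<longrightarrow> resolvent f \<tau> x \<noteq> {}))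
       \<and> (\<forall>lam. lam < 0 \<and> lambda_convex lam f \<longrightarrow>
            (\<forall>x \<tau>. 0 < \<tau> \<and> \<tau> < 1 / (- lam) \<longrightarrow> (\<exists>!z. z \<in> resolvent f \<tau> x)))"
proof (intro conjI impI allI)
  fix x :: 'a and \<tau> :: real
  assume "bdd_below (range f)" and "\<tau> > 0"
  then obtain b where b: "\<And>z. b \<le> f z" by (auto simp: bdd_below_def)
  show "resolvent f \<tau> x \<noteq> {}"
  proof (rule resolvent_nonempty[OF assms \<open>\<tau> > 0\<close>, of "1 / (2 * \<tau>)" b])
    show "b + 1 / (2 * \<tau>) * (dist x z)\<^sup>2 \<le> prox_objective f \<tau> x z" for z
      using b[of z] by (simp add: prox_objective_def)
    show "bdd_below (f ` cball x B)" for B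
      using \<open>bdd_below (range f)\<close> by (rule bdd_below_mono) auto
  qed (use \<open>\<tau> > 0\<close> in simp)
next
  fix lam :: real and x :: 'a and \<tau> :: real
  assume "lam < 0 \<and> lambda_convex lam f" and "0 < \<tau> \<and> \<tau> < 1 / (- lam)"
  then have lam: "lam \<le> 0" "lambda_convex lam f" and \<tau>: "\<tau> > 0" "lam + 1 / \<tau> > 0"
    by (auto simp: field_simps)
  obtain a b where "b \<ge> 0" and minorant: "\<And>z. a - b * dist x z + lam / 2 * (dist x z)\<^sup>2 \<le> f z"
    using lambda_convex_quadratic_minorant[OF assms(1,2) lam(2,1)] by blast
  note coercive = prox_objective_coercive[OF minorant \<tau>]
  have "resolvent f \<tau> x \<noteq> {}"
    using resolvent_nonempty[OF assms \<tau>(1) _ coercive] \<tau>(2)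
      bdd_below_cball_quadratic_minorant[OF minorant \<open>b \<ge> 0\<close> lam(1)]
    by simp
  moreover have "bdd_below (range (prox_objective f \<tau> x))"
    using bdd_below_prox_objective[OF _ coercive] \<tau>(2) by simp
  ultimately show "\<exists>!z. z \<in> resolvent f \<tau> x"
    using resolvent_subsingleton[OF assms(1) lam(2) \<tau>] by blast
qed

end
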